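(* The multiplicative GNS $s(n)=q^n-1$ on $\mathbf Z[[q-1]]$ is $\mathbf T$-Green: for all positive integers $m$ and $a,b\mid m$, with $g=\gcd(a,b)$ and $\ell=\operatorname{lcm}(a,b)$, \[ q^m-1\equiv\frac m\ell\cdot\frac{(q^a-1)(q^b-1)}{q^g-1}\bmod (q^a-1)(q^b-1). \]
   Context: A GNS over $D$ is $s\colon\mathbf N\to D$ with $s(0)=0$, $s(n)$ a non-zero-divisor for $n>0$, $s(n-k)\mid s(n)-s(k)$ for $n>k>0$. $\mathbf T$-Green means the congruence $s(m)\equiv\frac m\ell\frac{s(a)s(b)}{s(g)}\bmod s(a)s(b)$ holds for all $m\ge1$ and $a,b\mid m$. *)

theory Defs
  imports "HOL-Computational_Algebra.Formal_Power_Series"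
begin

definition GNS :: "(nat \<Rightarrow> 'a::comm_ring_1) \<Rightarrow> bool" where
  "GNS s \<longleftrightarrow> s 0 = 0
     \<and> (\<forall>n>0. \<forall>x. s n * x = 0 \<longrightarrow> x = 0)
     \<and> (\<forall>n k. 0 < k \<and> k < n \<longrightarrow> s (n - k) dvd s n - s k)"

text \<open>The quotient s a * s b / s g is expressed as the element c with
  c * s g = s a * s b (unique, as s g is a non-zero-divisor).\<close>
definition T_Green :: "(nat \<Rightarrow> 'a::comm_ring_1) \<Rightarrow> bool" where
  "T_Green s \<longleftrightarrow>
     (\<forall>m a b c. 1 \<le> m \<longrightarrow> a dvd m \<longrightarrow> b dvd m \<longrightarrow>
        c * s (gcd a b) = s a * s b \<longrightarrow>
        s a * s b dvd (s m - of_nat (m div lcm a b) * c))"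

text \<open>The ring Z[[q-1]] is int fps with q = 1 + X.\<close>
definition qnum :: "nat \<Rightarrow> int fps" where
  "qnum n = (1 + fps_X) ^ n - 1"

end

theory Submission
  imports Defs "HOL-Number_Theory.Cong"
begin

(* Write g = gcd a b, a = g u, b = g v, so that l = lcm a b = g u v, and put z = q^l.
   Both q^a - 1 and q^b - 1 divide z - 1, and q^m - 1 = z^(m/l) - 1 is congruent to
   (m/l)(z - 1) modulo (z - 1)^2; so it suffices that z - 1 is congruent to
   (q^a - 1)(q^b - 1)/(q^g - 1) modulo (q^a - 1)(q^b - 1). After cancelling q^a - 1 and
   writing x = q^g, this says that the sums of x^(u j) and of x^j over j < v agree modulo
   x^v - 1, which holds because j |-> u j mod v permutes {0..v-1}. All of this works for any
   q in any commutative ring; Z[[q-1]] enters only through q^g - 1 being nonzero, which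
   identifies the quotient. *)

lemma sub_one_dvd_power_sub_one: "(x::'a::comm_ring_1) - 1 dvd x ^ n - 1"
  by (simp add: power_diff_1_eq)

lemma sub_one_dvd_geometric_sum_sub_count:
  "(y::'a::comm_ring_1) - 1 dvd (\<Sum>i<k. y ^ i) - of_nat k"
proof -
  have "(\<Sum>i<k. y ^ i) - of_nat k = (\<Sum>i<k. y ^ i - 1)"
    by (simp add: sum_subtractf)
  then show ?thesis
    by (simp add: dvd_sum sub_one_dvd_power_sub_one)
qed

lemma power_sub_one_cong_mult_sub_one:
  "((y::'a::comm_ring_1) - 1) ^ 2 dvd (y ^ k - 1) - of_nat k * (y - 1)"
proof -
  have "(y ^ k - 1) - of_nat k * (y - 1) = (y - 1) * ((\<Sum>i<k. y ^ i) - of_nat k)"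
    by (simp add: power_diff_1_eq algebra_simps)
  then show ?thesis
    by (simp add: power2_eq_square mult_dvd_mono sub_one_dvd_geometric_sum_sub_count)
qed

lemma bij_betw_mult_mod_lessThan:
  assumes "coprime u (v::nat)"
  shows "bij_betw (\<lambda>j. u * j mod v) {..<v} {..<v}"
proof -
  have inj: "inj_on (\<lambda>j. u * j mod v) {..<v}"
  proof (rule inj_onI)
    fix i j assume "i \<in> {..<v}" "j \<in> {..<v}" "u * i mod v = u * j mod v"
    then have "[i = j] (mod v)"
      using assms cong_mult_lcancel_nat unfolding cong_def by blast
    with \<open>i \<in> {..<v}\<close> \<open>j \<in> {..<v}\<close> show "i = j"
      using cong_less_imp_eq_nat by auto
  qed
  moreover have "(\<lambda>j. u * j mod v) ` {..<v} = {..<v}"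
    by (rule endo_inj_surj) (use inj in \<open>auto intro: mod_less_divisor\<close>)
  ultimately show ?thesis
    by (simp add: bij_betw_def)
qed

lemma power_sub_one_dvd_power_sub_power_mod:
  "(x::'a::comm_ring_1) ^ v - 1 dvd x ^ n - x ^ (n mod v)"
proof -
  have "x ^ n = x ^ (n mod v) * (x ^ v) ^ (n div v)"
    by (metis mod_mult_div_eq power_add power_mult)
  then have "x ^ n - x ^ (n mod v) = x ^ (n mod v) * ((x ^ v) ^ (n div v) - 1)"
    by (simp add: algebra_simps)
  then show ?thesis
    using sub_one_dvd_power_sub_one by (metis dvd_mult)
qed

lemma geometric_sum_power_coprime_cong:
  assumes "coprime u v"
  shows "(x::'a::comm_ring_1) ^ v - 1 dvd (\<Sum>j<v. (x ^ u) ^ j) - (\<Sum>j<v. x ^ j)"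
proof -
  have "(\<Sum>j<v. x ^ j) = (\<Sum>j<v. x ^ (u * j mod v))"
    using sum.reindex_bij_betw[OF bij_betw_mult_mod_lessThan[OF assms], of "power x"] by simp
  then have "(\<Sum>j<v. (x ^ u) ^ j) - (\<Sum>j<v. x ^ j) = (\<Sum>j<v. x ^ (u * j) - x ^ (u * j mod v))"
    by (simp add: sum_subtractf power_mult)
  then show ?thesis
    by (simp add: dvd_sum power_sub_one_dvd_power_sub_power_mod)
qed

lemma power_sub_one_eq_mult_geometric_sum:
  assumes "g dvd b"
  shows "(q::'a::comm_ring_1) ^ b - 1 = (q ^ g - 1) * (\<Sum>j < b div g. q ^ (g * j))"
proof -
  from assms obtain c where "b = g * c" ..
  then show ?thesis
    using power_diff_1_eq[of "q ^ g" c] by (cases "g = 0") (simp_all add: power_mult)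
qed

lemma power_sub_one_T_Green_dvd_coprime:
  assumes "coprime u v"
  shows "((x::'a::comm_ring_1) ^ u - 1) * (x ^ v - 1) dvd
           (x ^ (u * v) - 1) - (x ^ u - 1) * (\<Sum>j<v. x ^ j)"
proof -
  have "x ^ (u * v) - 1 = (x ^ u - 1) * (\<Sum>j<v. (x ^ u) ^ j)"
    unfolding power_mult by (rule power_diff_1_eq)
  then have "(x ^ (u * v) - 1) - (x ^ u - 1) * (\<Sum>j<v. x ^ j)
               = (x ^ u - 1) * ((\<Sum>j<v. (x ^ u) ^ j) - (\<Sum>j<v. x ^ j))"
    by (simp only: right_diff_distrib)
  then show ?thesis
    using mult_dvd_mono[OF dvd_refl geometric_sum_power_coprime_cong[OF assms]] by (simp only:)
qed

(* The last factor is (q^a - 1)(q^b - 1)/(q^g - 1), written without division. *)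
lemma power_sub_one_T_Green_dvd:
  fixes q :: "'a::comm_ring_1"
  assumes "a dvd m" "b dvd m"
  shows "(q ^ a - 1) * (q ^ b - 1) dvd
           (q ^ m - 1) - of_nat (m div lcm a b) *
             ((q ^ a - 1) * (\<Sum>j < b div gcd a b. q ^ (gcd a b * j)))"
proof (cases "m = 0")
  case False
  define g where "g = gcd a b"
  define u where "u = a div g"
  define v where "v = b div g"
  define k where "k = m div lcm a b"
  define x where "x = q ^ g"
  define z where "z = x ^ (u * v)"
  have "a \<noteq> 0" "b \<noteq> 0"
    using assms False by auto
  then have "coprime u v"
    by (simp add: u_def v_def g_def div_gcd_coprime)
  have "a = g * u" "b = g * v"
    by (simp_all add: u_def v_def g_def)
  then have a: "q ^ a = x ^ u" and b: "q ^ b = x ^ v"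
    by (simp_all add: x_def power_mult)
  have "lcm a b = g * (u * v)"
    using \<open>a = g * u\<close> \<open>b = g * v\<close> \<open>coprime u v\<close> by (simp add: lcm_mult_left lcm_coprime)
  moreover have "lcm a b dvd m"
    using assms by (rule lcm_least)
  ultimately have m: "q ^ m = z ^ k"
    unfolding z_def x_def k_def by (auto simp flip: power_mult)
  have "q ^ a - 1 dvd z - 1"
    using sub_one_dvd_power_sub_one[of "x ^ u" v] by (simp only: a z_def power_mult)
  moreover have "q ^ b - 1 dvd z - 1"
    using sub_one_dvd_power_sub_one[of "x ^ v" u] by (simp only: b z_def mult.commute[of u] power_mult)
  ultimately have "(q ^ a - 1) * (q ^ b - 1) dvd (z - 1) ^ 2"
    unfolding power2_eq_square by (rule mult_dvd_mono)
  then have first: "(q ^ a - 1) * (q ^ b - 1) dvd (q ^ m - 1) - of_nat k * (z - 1)"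
    unfolding m using power_sub_one_cong_mult_sub_one by (rule dvd_trans)
  have sum: "(\<Sum>j<v. q ^ (g * j)) = (\<Sum>j<v. x ^ j)"
    by (simp only: x_def power_mult)
  have second: "(q ^ a - 1) * (q ^ b - 1) dvd (z - 1) - (q ^ a - 1) * (\<Sum>j<v. x ^ j)"
    unfolding a b z_def using \<open>coprime u v\<close> by (rule power_sub_one_T_Green_dvd_coprime)
  have "(q ^ m - 1) - of_nat k * ((q ^ a - 1) * (\<Sum>j<v. x ^ j))
          = ((q ^ m - 1) - of_nat k * (z - 1))
            + of_nat k * ((z - 1) - (q ^ a - 1) * (\<Sum>j<v. x ^ j))"
    by (simp add: algebra_simps)
  also have "(q ^ a - 1) * (q ^ b - 1) dvd \<dots>"
    using first second by (intro dvd_add dvd_mult)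
  finally show ?thesis
    unfolding g_def[symmetric] v_def[symmetric] k_def[symmetric] sum .
qed simp

lemma fps_nth_power_one_plus_X_1: "fps_nth ((1 + fps_X :: 'a::comm_semiring_1 fps) ^ n) 1 = of_nat n"
proof (induction n)
  case (Suc n)
  have "(1 + fps_X :: 'a fps) ^ Suc n = (1 + fps_X) ^ n + fps_X * (1 + fps_X) ^ n"
    by (simp add: algebra_simps)
  then show ?case
    using Suc by (simp add: fps_nth_power_0 add.commute)
qed simp

lemma qnum_nonzero: "0 < n \<Longrightarrow> qnum n \<noteq> 0"
  using fps_nth_power_one_plus_X_1[of n, where 'a = int] by (auto simp: qnum_def)

theorem lemma5p15:
  shows "T_Green qnum"
  unfolding T_Green_def
proof (intro allI impI)
  fix m a b :: nat and c :: "int fps"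
  assume "1 \<le> m" "a dvd m" "b dvd m" and c: "c * qnum (gcd a b) = qnum a * qnum b"
  define q :: "int fps" where "q = 1 + fps_X"
  define Q where "Q = (\<Sum>j < b div gcd a b. q ^ (gcd a b * j))"
  have "qnum b = qnum (gcd a b) * Q"
    unfolding qnum_def Q_def q_def[symmetric] by (simp add: power_sub_one_eq_mult_geometric_sum)
  then have "c * qnum (gcd a b) = (qnum a * Q) * qnum (gcd a b)"
    using c by (simp add: mult_ac)
  moreover have "qnum (gcd a b) \<noteq> 0"
    using \<open>1 \<le> m\<close> \<open>a dvd m\<close> by (intro qnum_nonzero) (auto intro: Nat.gr0I)
  ultimately have "c = qnum a * Q"
    by simp
  then show "qnum a * qnum b dvd qnum m - of_nat (m div lcm a b) * c"
    using power_sub_one_T_Green_dvd[OF \<open>a dvd m\<close> \<open>b dvd m\<close>, of q]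
    unfolding qnum_def Q_def q_def by simp
qed

end
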